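(* Let $f\in F$ be strongly positive. Then $f$ can be expressed uniquely in the form $f=x_{i_n}\cdots x_{i_2}x_{i_1}$ with $n\ge0$, all $i_k\ge1$, and $i_{k+1}\ge i_k-1$ for all $k=1,\dots,n-1$.
   Context: Thompson's group $F=\langle x_0,x_1,x_2,\dots\mid x_nx_k=x_kx_{n+1}\text{ for }k<n\rangle$. An element of $F$ is strongly positive if it lies in the submonoid generated by $x_1,x_2,x_3,\dots$. Uniqueness means uniqueness of the sequence $(i_n,\dots,i_1)$. *)

theory Defs
  imports Main
begin

text \<open>Thompson's group F given by its presentation
  < x0, x1, ... | x_n x_k = x_k x_(n+1) for k < n >.
  Group words are lists of letters (i, True) = x_i and (i, False) = x_i^-1.
  F is the quotient of words by the smallest congruence containing free
  cancellation and the defining relations.\<close>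

type_synonym gword = "(nat \<times> bool) list"

inductive F_eqv :: "gword \<Rightarrow> gword \<Rightarrow> bool" where
  refl: "F_eqv w w"
| sym: "F_eqv u w \<Longrightarrow> F_eqv w u"
| trans: "F_eqv u v \<Longrightarrow> F_eqv v w \<Longrightarrow> F_eqv u w"
| cong: "F_eqv u u' \<Longrightarrow> F_eqv v v' \<Longrightarrow> F_eqv (u @ v) (u' @ v')"
| cancel: "F_eqv [(i, b), (i, \<not> b)] []"
| rel: "k < n \<Longrightarrow> F_eqv [(n, True), (k, True)] [(k, True), (Suc n, True)]"

lemma equivp_F_eqv: "equivp F_eqv"
  by (rule equivpI) (auto simp: reflp_def symp_def transp_def intro: F_eqv.intros)

quotient_type thompsonF = gword / F_eqv
  by (rule equivp_F_eqv)

lift_definition F_one :: thompsonF is "[]" .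

lift_definition F_mult :: "thompsonF \<Rightarrow> thompsonF \<Rightarrow> thompsonF" is "(@)"
  by (rule F_eqv.cong)

lift_definition F_gen :: "nat \<Rightarrow> thompsonF" ("x") is "\<lambda>i. [(i, True)]" .

definition F_word :: "nat list \<Rightarrow> thompsonF" where
  "F_word l = foldr (\<lambda>i g. F_mult (x i) g) l F_one"

definition strongly_positive :: "thompsonF \<Rightarrow> bool" where
  "strongly_positive f \<longleftrightarrow> (\<exists>l. (\<forall>i\<in>set l. 1 \<le> i) \<and> f = F_word l)"

end

theory Submission
  imports Defs "HOL-Library.Stream"
begin

text \<open>Existence: for \<open>a + 1 < b\<close> the relation \<open>x\<^sub>a x\<^sub>b = x\<^bsub>b-1\<^esub> x\<^sub>a\<close> pushes a new
  leftmost letter \<open>x\<^sub>a\<close> to the right past the larger letters until it meets a letter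
  \<open>\<le> a + 1\<close>; inserting the letters of a positive word one by one in this way
  yields a normal form.

  Uniqueness: \<open>F\<close> acts on the right on pairs \<open>(i, s)\<close>, read as the binary sequences
  \<open>1\<^sup>i 0 s\<close>, with \<open>x\<^sub>n\<close> acting by \<open>00 \<mapsto> 0, 01 \<mapsto> 10, 1 \<mapsto> 11\<close> after the prefix
  \<open>1\<^sup>n\<close>. A normal form starting with \<open>a\<close> moves the point \<open>(a, 0111\<dots>)\<close>, but only
  shifts the index of every point \<open>(i, s)\<close> with \<open>i > a\<close>. So the action determines
  the first letter of a normal form, and cancelling it gives uniqueness by
  induction.\<close>

abbreviation F_normal :: "nat list \<Rightarrow> bool" where
  "F_normal \<equiv> successively (\<lambda>i j. j \<le> Suc i)"

lemma F_word_Cons: "F_word (a # l) = F_mult (x a) (F_word l)"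
  by (simp add: F_word_def)

lemma F_word_eq_abs: "F_word l = abs_thompsonF (map (\<lambda>i. (i, True)) l)"
  by (induction l) (simp_all add: F_word_def F_one_def F_gen_def F_mult.abs_eq)

lemma F_word_rel: "k < n \<Longrightarrow> F_word (n # k # l) = F_word (k # Suc n # l)"
  by (simp add: F_word_eq_abs thompsonF.abs_eq_iff
      F_eqv.cong[OF F_eqv.rel F_eqv.refl, simplified])

primrec nf_cons :: "nat \<Rightarrow> nat list \<Rightarrow> nat list" where
  "nf_cons a [] = [a]"
| "nf_cons a (b # l) = (if a + 1 < b then (b - 1) # nf_cons a l else a # b # l)"

lemma F_word_nf_cons: "F_word (nf_cons a l) = F_word (a # l)"
proof (induction l)
  case (Cons b l)
  show ?case
  proof (cases "a + 1 < b")
    case True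
    then have "F_word (a # b # l) = F_word ((b - 1) # a # l)"
      using F_word_rel[of a "b - 1" l] by simp
    with True Cons.IH show ?thesis by (simp add: F_word_Cons)
  qed simp
qed simp

lemma hd_nf_cons_le: "hd (nf_cons a l) \<le> max a (hd l - 1)"
  by (cases l) auto

lemma F_normal_nf_cons: "F_normal l \<Longrightarrow> F_normal (nf_cons a l)"
  by (induction l) (auto simp: successively_Cons intro: order.trans[OF hd_nf_cons_le])

lemma positive_nf_cons:
  "1 \<le> a \<Longrightarrow> \<forall>i\<in>set l. 1 \<le> i \<Longrightarrow> \<forall>i\<in>set (nf_cons a l). 1 \<le> i"
  by (induction l) auto

definition F_nf :: "nat list \<Rightarrow> nat list" where
  "F_nf l = foldr nf_cons l []"

lemma F_word_F_nf: "F_word (F_nf l) = F_word l"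
  by (induction l) (simp_all add: F_nf_def F_word_nf_cons F_word_Cons)

lemma F_normal_F_nf: "F_normal (F_nf l)"
  by (induction l) (simp_all add: F_nf_def F_normal_nf_cons)

lemma positive_F_nf: "\<forall>i\<in>set l. 1 \<le> i \<Longrightarrow> \<forall>i\<in>set (F_nf l). 1 \<le> i"
proof (induction l)
  case (Cons a l)
  then show ?case using positive_nf_cons[of a "F_nf l"] by (simp add: F_nf_def)
qed (simp add: F_nf_def)

definition gen_act :: "nat \<Rightarrow> nat \<times> bool stream \<Rightarrow> nat \<times> bool stream" where
  "gen_act n = (\<lambda>(i, s). if i < n then (i, s) else if n < i then (Suc i, s)
     else if shd s then (Suc n, stl s) else (n, stl s))"

definition gen_act_inv :: "nat \<Rightarrow> nat \<times> bool stream \<Rightarrow> nat \<times> bool stream" where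
  "gen_act_inv n = (\<lambda>(i, s). if i < n then (i, s) else if i = n then (n, False ## s)
     else if i = Suc n then (n, True ## s) else (i - 1, s))"

definition letter_act :: "nat \<times> bool \<Rightarrow> nat \<times> bool stream \<Rightarrow> nat \<times> bool stream" where
  "letter_act = (\<lambda>(n, b). if b then gen_act n else gen_act_inv n)"

lemma gen_act_gen_act_inv [simp]: "gen_act n (gen_act_inv n p) = p"
  by (cases p) (auto simp: gen_act_def gen_act_inv_def)

lemma gen_act_inv_gen_act [simp]: "gen_act_inv n (gen_act n p) = p"
  by (cases p, cases "snd p") (auto simp: gen_act_def gen_act_inv_def)

lemma gen_act_rel: "k < n \<Longrightarrow> gen_act k (gen_act n p) = gen_act (Suc n) (gen_act k p)"
  by (cases p) (auto simp: gen_act_def)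

lemma fold_letter_act_F_eqv: "F_eqv u v \<Longrightarrow> fold letter_act u = fold letter_act v"
proof (induction rule: F_eqv.induct)
  case (cancel i b)
  then show ?case by (auto simp: fun_eq_iff letter_act_def)
next
  case (rel k n)
  then show ?case by (simp add: fun_eq_iff letter_act_def gen_act_rel)
qed simp_all

lemma fold_gen_act_eq_if_F_word_eq:
  "F_word l = F_word m \<Longrightarrow> fold gen_act l = fold gen_act m"
  by (auto simp: F_word_eq_abs thompsonF.abs_eq_iff fold_map comp_def letter_act_def
      dest!: fold_letter_act_F_eqv)

lemma snd_fold_gen_act_sdrop: "\<exists>k. snd (fold gen_act l (i, s)) = sdrop k s"
proof (induction l arbitrary: i s)
  case Nil
  show ?case by (metis fold_simps(1) sdrop.simps(1) snd_conv)
next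
  case (Cons a l)
  define k where "k = (if i = a then 1 else 0 :: nat)"
  have "snd (gen_act a (i, s)) = sdrop k s"
    by (simp add: gen_act_def k_def)
  then obtain j where "gen_act a (i, s) = (j, sdrop k s)"
    by (metis prod.collapse)
  moreover obtain k' where "snd (fold gen_act l (j, sdrop k s)) = sdrop k' (sdrop k s)"
    using Cons.IH by blast
  ultimately show ?case by auto
qed

lemma fold_gen_act_above:
  "F_normal (a # l) \<Longrightarrow> a < i \<Longrightarrow> fold gen_act (a # l) (i, s) = (i + length (a # l), s)"
proof (induction l arbitrary: a i)
  case (Cons b l)
  then have "fold gen_act (b # l) (Suc i, s) = (Suc i + length (b # l), s)"
    by (simp add: successively_Cons)
  moreover have "gen_act a (i, s) = (Suc i, s)"
    using Cons.prems by (simp add: gen_act_def)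
  ultimately show ?case by simp
qed (simp add: gen_act_def)

lemma fold_gen_act_Cons_moves: "shd (snd (fold gen_act (a # l) (a, False ## sconst True)))"
proof -
  obtain k where "snd (fold gen_act l (a, sconst True)) = sdrop k (sconst True)"
    using snd_fold_gen_act_sdrop by blast
  then show ?thesis by (simp add: gen_act_def)
qed

lemma fold_gen_act_Nil_neq: "fold gen_act [] \<noteq> fold gen_act (b # m)"
  by (metis fold_gen_act_Cons_moves fold_simps(1) snd_conv stream.sel(1))

lemma fold_gen_act_Cons_neq:
  "F_normal (a # l) \<Longrightarrow> a < b \<Longrightarrow> fold gen_act (a # l) \<noteq> fold gen_act (b # m)"
  by (metis fold_gen_act_above fold_gen_act_Cons_moves snd_conv stream.sel(1))

lemma F_normal_fold_gen_act_inj: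
  "F_normal l \<Longrightarrow> F_normal m \<Longrightarrow> fold gen_act l = fold gen_act m \<Longrightarrow> l = m"
proof (induction l arbitrary: m)
  case Nil
  then show ?case by (metis fold_gen_act_Nil_neq neq_Nil_conv)
next
  case (Cons a l)
  then obtain b m' where m: "m = b # m'"
    by (metis fold_gen_act_Nil_neq neq_Nil_conv)
  have "a = b"
    using Cons.prems m fold_gen_act_Cons_neq by (metis linorder_neqE_nat)
  then have "fold gen_act l (gen_act a p) = fold gen_act m' (gen_act a p)" for p
    using Cons.prems(3) m by (metis fold_simps(2))
  then have "fold gen_act l = fold gen_act m'"
    by (metis gen_act_gen_act_inv ext)
  moreover have "F_normal l" "F_normal m'"
    using Cons.prems m by (auto simp: successively_Cons)
  ultimately show ?case using Cons.IH m \<open>a = b\<close> by blast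
qed

lemma F_normal_F_word_inj: "F_normal l \<Longrightarrow> F_normal m \<Longrightarrow> F_word l = F_word m \<Longrightarrow> l = m"
  by (blast intro: F_normal_fold_gen_act_inj fold_gen_act_eq_if_F_word_eq)

theorem theorem4p1p7:
  fixes f :: thompsonF
  assumes "strongly_positive f"
  shows "\<exists>!l :: nat list. (\<forall>i\<in>set l. 1 \<le> i)
           \<and> (\<forall>j. Suc j < length l \<longrightarrow> l ! (Suc j) \<le> l ! j + 1)
           \<and> f = F_word l"
proof -
  obtain l where pos: "\<forall>i\<in>set l. 1 \<le> i" and f: "f = F_word l"
    using assms by (auto simp: strongly_positive_def)
  have normal_iff: "(\<forall>j. Suc j < length m \<longrightarrow> m ! (Suc j) \<le> m ! j + 1) \<longleftrightarrow> F_normal m" for m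
    by (simp add: successively_conv_nth)
  show ?thesis
  proof (rule ex1I[of _ "F_nf l"])
    show "(\<forall>i\<in>set (F_nf l). 1 \<le> i)
        \<and> (\<forall>j. Suc j < length (F_nf l) \<longrightarrow> F_nf l ! (Suc j) \<le> F_nf l ! j + 1)
        \<and> f = F_word (F_nf l)"
      using positive_F_nf[OF pos] F_normal_F_nf normal_iff F_word_F_nf f by simp
  next
    fix m
    assume "(\<forall>i\<in>set m. 1 \<le> i)
        \<and> (\<forall>j. Suc j < length m \<longrightarrow> m ! (Suc j) \<le> m ! j + 1) \<and> f = F_word m"
    then show "m = F_nf l"
      using F_normal_F_word_inj F_normal_F_nf normal_iff F_word_F_nf f by metis
  qed
qed

end
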